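(* Let $\mathcal{D}$ be a distribution on $\mathbb{R}^d\times\mathbb{R}$ with $\|\mathbf{x}\|_\infty\le1$ and $|y|\le B$ almost surely. The GAELR algorithm (with any sampling distribution $(q_1,\dots,q_d)$ and budget $k$) generates gradient estimates satisfying, for all $t$, $$\big\|\mathbb{E}_{\mathcal{D},A}[\widetilde{\mathbf{g}}_t^2]\big\|_\infty\le 4B^2\Big(\frac1k\big\|\mathbb{E}_{\mathcal{D},A}[\widetilde{\mathbf{x}}_{t,r}^2]\big\|_\infty+1\Big).$$
   Context: For a vector $\mathbf{a}$, $\mathbf{a}^2$ denotes its coordinatewise square. $\mathrm{clip}(x,c)=\max\{\min\{x,c\},-c\}$. Algorithm GAELR (parameters $B,\eta>0$, probabilities $q_i$ summing to $1$, integer budget $k>0$; i.i.d. examples $(\mathbf{x}_t,y_t)\sim\mathcal{D}$): $\mathbf{z}_1^\pm=\mathbf{1}_d$. For each $t$: $\mathbf{w}_t=(\mathbf{z}_t^+-\mathbf{z}_t^-)B/(\|\mathbf{z}_t^+\|_1+\|\mathbf{z}_t^-\|_1)$; for $r=1..k$ draw $i_{t,r}$ with probability $q_{i_{t,r}}$ and set $\widetilde{\mathbf{x}}_{t,r}=\frac{1}{q_{i_{t,r}}}\mathbf{x}_t[i_{t,r}]\mathbf{e}_{i_{t,r}}$ (identically distributed over $r$); $\widetilde{\mathbf{x}}_t=\frac1k\sum_r\widetilde{\mathbf{x}}_{t,r}$; draw $j_t$ with probability $p_j=|w_{t,j}|/\|\mathbf{w}_t\|_1$, $\widetilde\phi_t=\frac{w_{t,j_t}}{p_{j_t}}\mathbf{x}_t[j_t]-y_t$;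 $\widetilde{\mathbf{g}}_t=\widetilde\phi_t\widetilde{\mathbf{x}}_t$; $\bar{\mathbf{g}}_t[i]=\mathrm{clip}(\widetilde{\mathbf{g}}_t[i],1/\eta)$; $\mathbf{z}_{t+1}^+[i]=\mathbf{z}_t^+[i]e^{-\eta\bar{\mathbf{g}}_t[i]}$, $\mathbf{z}_{t+1}^-[i]=\mathbf{z}_t^-[i]e^{\eta\bar{\mathbf{g}}_t[i]}$. All draws independent. $\mathbb{E}_{\mathcal{D},A}$ is expectation over examples and algorithm randomness. *)

theory Defs
  imports "HOL-Analysis.Analysis" "HOL-Probability.Probability"
begin

text \<open>Coordinates are indexed by a finite type 'n (so d = CARD('n)).\<close>

definition l1norm :: "real^'n \<Rightarrow> real" where
  "l1norm v = (\<Sum>i\<in>UNIV. \<bar>v$i\<bar>)"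

definition linfnorm :: "real^'n \<Rightarrow> real" where
  "linfnorm v = Max (range (\<lambda>i. \<bar>v$i\<bar>))"

definition csq :: "real^'n \<Rightarrow> real^'n" where
  "csq v = (\<chi> i. (v$i)^2)"

definition clip :: "real \<Rightarrow> real \<Rightarrow> real" where
  "clip x c = max (min x c) (- c)"

text \<open>state = (z+, z-)\<close>
definition weight :: "real \<Rightarrow> (real^'n) \<times> (real^'n) \<Rightarrow> real^'n" where
  "weight B s = (B / (l1norm (fst s) + l1norm (snd s))) *\<^sub>R (fst s - snd s)"

text \<open>distribution of j_t: p_j = |w_j| / ||w||_1 (uniform if w = 0; then w_j/p_j = 0 anyway)\<close>
definition jdist :: "real^'n \<Rightarrow> 'n pmf" where
  "jdist w = (if w = 0 then pmf_of_set UNIV else embed_pmf (\<lambda>j. \<bar>w$j\<bar> / l1norm w))"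

definition xtil_r :: "'n pmf \<Rightarrow> real^'n \<Rightarrow> 'n \<Rightarrow> real^'n" where
  "xtil_r q x i = (x$i / pmf q i) *\<^sub>R axis i 1"

definition xtil :: "'n pmf \<Rightarrow> nat \<Rightarrow> real^'n \<Rightarrow> (nat \<Rightarrow> 'n) \<Rightarrow> real^'n" where
  "xtil q k x I = (1 / real k) *\<^sub>R (\<Sum>r<k. xtil_r q x (I r))"

definition phitil :: "real^'n \<Rightarrow> real^'n \<Rightarrow> real \<Rightarrow> 'n \<Rightarrow> real" where
  "phitil w x y j = (w$j / pmf (jdist w) j) * x$j - y"

text \<open>outcome of the randomness of one round: ((x_t,y_t), (i_{t,r})_{r<k}, j_t)\<close>
type_synonym 'n outcome = "((real^'n) \<times> real) \<times> (nat \<Rightarrow> 'n) \<times> 'n"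

definition gtil :: "'n pmf \<Rightarrow> nat \<Rightarrow> real^'n \<Rightarrow> 'n outcome \<Rightarrow> real^'n" where
  "gtil q k w \<omega> = phitil w (fst (fst \<omega>)) (snd (fst \<omega>)) (snd (snd \<omega>)) *\<^sub>R
                     xtil q k (fst (fst \<omega>)) (fst (snd \<omega>))"

definition next_state :: "real \<Rightarrow> (real^'n) \<times> (real^'n) \<Rightarrow> real^'n \<Rightarrow> (real^'n) \<times> (real^'n)" where
  "next_state \<eta> s g =
     (let gb = (\<chi> i. clip (g$i) (1/\<eta>))
      in ((\<chi> i. fst s $ i * exp (- \<eta> * gb$i)), (\<chi> i. snd s $ i * exp (\<eta> * gb$i))))"

definition step_space :: "((real^'n) \<times> real) measure \<Rightarrow> 'n pmf \<Rightarrow> nat \<Rightarrow> real^'n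
     \<Rightarrow> 'n outcome measure" where
  "step_space D q k w =
     D \<Otimes>\<^sub>M (measure_pmf (Pi_pmf {..<k} undefined (\<lambda>_. q)) \<Otimes>\<^sub>M measure_pmf (jdist w))"

primrec state_dist :: "((real^'n) \<times> real) measure \<Rightarrow> 'n pmf \<Rightarrow> nat \<Rightarrow> real \<Rightarrow> real
     \<Rightarrow> nat \<Rightarrow> ((real^'n) \<times> (real^'n)) measure" where
  "state_dist D q k B \<eta> 0 = return borel (1, 1)"
| "state_dist D q k B \<eta> (Suc t) =
     bind (state_dist D q k B \<eta> t)
       (\<lambda>s. distr (step_space D q k (weight B s)) borel
               (\<lambda>\<omega>. next_state \<eta> s (gtil q k (weight B s) \<omega>)))"

text \<open>E_{D,A}[F] for a round-t quantity F(state_t, outcome_t), written as the iterated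
  integral over the law of the state and then the round's fresh randomness\<close>
definition EA :: "((real^'n) \<times> real) measure \<Rightarrow> 'n pmf \<Rightarrow> nat \<Rightarrow> real \<Rightarrow> real \<Rightarrow> nat
     \<Rightarrow> ((real^'n) \<times> (real^'n) \<Rightarrow> 'n outcome \<Rightarrow> real^'n) \<Rightarrow> real^'n" where
  "EA D q k B \<eta> t F =
     (\<integral>s. (\<integral>\<omega>. F s \<omega> \<partial>step_space D q k (weight B s)) \<partial>state_dist D q k B \<eta> t)"

end

theory Submission
  imports Defs
begin

text \<open>The index \<open>j\<^sub>t\<close> is drawn with probability proportional to \<open>|w\<^sub>j|\<close>, so the importance
  weight \<open>w\<^sub>j / p\<^sub>j = sgn w\<^sub>j \<cdot> \<parallel>w\<parallel>\<^sub>1\<close> has modulus at most \<open>\<parallel>w\<parallel>\<^sub>1 \<le> B\<close>; hence \<open>|\<phi>\<^sub>t| \<le> 2B\<close> and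
  \<open>g\<^sub>t\<^sup>2 \<le> 4B\<^sup>2 x\<^sub>t\<^sup>2\<close> coordinatewise. The estimate \<open>x\<^sub>t\<close> is the mean of \<open>k\<close> independent
  single-coordinate estimates, each with mean \<open>x[i]\<close> and second moment \<open>v = x[i]\<^sup>2/q\<^sub>i\<close>, so
  \<open>E x\<^sub>t[i]\<^sup>2 = v/k + (1 - 1/k) x[i]\<^sup>2 \<le> v/k + 1\<close>. These bounds hold for every state of the
  algorithm, so they survive integration against the law of the state, a probability measure.\<close>

section \<open>Norms and importance weights\<close>

lemma l1norm_nonneg: "0 \<le> l1norm v"
  unfolding l1norm_def by (simp add: sum_nonneg)

lemma l1norm_eq_0_iff: "l1norm (v::real^'n) = 0 \<longleftrightarrow> v = 0"
  unfolding l1norm_def by (subst sum_nonneg_eq_0_iff) (auto simp: vec_eq_iff)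

lemma abs_le_linfnorm: "\<bar>v $ i\<bar> \<le> linfnorm (v::real^'n)"
  unfolding linfnorm_def by (rule Max_ge) auto

lemma abs_nth_le_of_linfnorm_le: "linfnorm (v::real^'n) \<le> c \<Longrightarrow> \<bar>v $ i\<bar> \<le> c"
  using abs_le_linfnorm order_trans by blast

lemma linfnorm_le: "(\<And>i. \<bar>v $ i\<bar> \<le> C) \<Longrightarrow> linfnorm (v::real^'n) \<le> C"
  unfolding linfnorm_def by (rule Max.boundedI) auto

lemma csq_nth [simp]: "csq v $ i = (v $ i)^2"
  by (simp add: csq_def)

lemma pmf_jdist:
  "pmf (jdist (w::real^'n)) j = (if w = 0 then 1 / real CARD('n) else \<bar>w$j\<bar> / l1norm w)"
proof (cases "w = 0")
  case True
  then show ?thesis by (simp add: jdist_def pmf_of_set)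
next
  case False
  then have pos: "0 < l1norm w"
    using l1norm_nonneg[of w] l1norm_eq_0_iff[of w] by linarith
  have nonneg: "0 \<le> \<bar>w $ x\<bar> / l1norm w" for x
    using pos by simp
  have "(\<Sum>x\<in>UNIV. \<bar>w $ x\<bar> / l1norm w) = 1"
    using pos by (simp add: sum_divide_distrib[symmetric] l1norm_def)
  then have "(\<integral>\<^sup>+ x. ennreal (\<bar>w $ x\<bar> / l1norm w) \<partial>count_space UNIV) = 1"
    by (simp add: nn_integral_count_space_finite sum_ennreal nonneg)
  then have "pmf (embed_pmf (\<lambda>j. \<bar>w$j\<bar> / l1norm w)) j = \<bar>w$j\<bar> / l1norm w"
    by (intro pmf_embed_pmf nonneg)
  then show ?thesis using False by (simp add: jdist_def)
qed

lemma importance_weight_jdist: "(w::real^'n) $ j / pmf (jdist w) j = sgn (w$j) * l1norm w"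
proof (cases "w = 0")
  case True
  then show ?thesis by (simp add: l1norm_def)
next
  case False
  then have "0 < l1norm w"
    using l1norm_nonneg[of w] l1norm_eq_0_iff[of w] by linarith
  with False show ?thesis
    by (cases "w$j" "0::real" rule: linorder_cases) (simp_all add: pmf_jdist)
qed

lemma l1norm_weight_le:
  assumes "0 < B" shows "l1norm (weight B s) \<le> B"
proof -
  obtain a b where s: "s = (a, b)" by force
  have triangle: "l1norm (a - b) \<le> l1norm a + l1norm b"
    unfolding l1norm_def by (simp add: sum.distrib[symmetric] sum_mono abs_triangle_ineq4)
  have "l1norm (weight B s) = \<bar>B / (l1norm a + l1norm b)\<bar> * l1norm (a - b)"
    by (simp add: weight_def s l1norm_def sum_distrib_left abs_mult)
  also have "\<dots> \<le> B"
  proof (cases "l1norm a + l1norm b = 0")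
    case True
    then show ?thesis using assms by simp
  next
    case False
    then have "0 < l1norm a + l1norm b"
      using l1norm_nonneg[of a] l1norm_nonneg[of b] by linarith
    then show ?thesis
      using triangle assms by (simp add: divide_le_eq mult.commute mult_left_mono)
  qed
  finally show ?thesis .
qed

lemma phitil_sq_le:
  assumes "\<bar>(x::real^'n)$j\<bar> \<le> 1" "\<bar>y\<bar> \<le> B" "l1norm w \<le> B"
  shows "(phitil w x y j)^2 \<le> 4 * B^2"
proof -
  have "l1norm w * \<bar>x$j\<bar> \<le> B * 1"
    using assms(1,3) l1norm_nonneg[of w] by (intro mult_mono) auto
  then have "\<bar>sgn (w$j) * l1norm w * x$j\<bar> \<le> B"
    using assms(3) l1norm_nonneg[of w] by (simp add: abs_mult sgn_if)
  then have "\<bar>phitil w x y j\<bar> \<le> 2 * B"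
    using assms(2) unfolding phitil_def importance_weight_jdist by linarith
  then have "\<bar>phitil w x y j\<bar>^2 \<le> (2 * B)^2"
    by (intro power_mono) auto
  then show ?thesis by (simp add: power_mult_distrib)
qed

lemma csq_gtil_le:
  assumes "\<forall>j. \<bar>x$j\<bar> \<le> 1" "\<bar>y\<bar> \<le> B" "l1norm w \<le> B"
  shows "csq (gtil q k w ((x, y), (I, j))) $ i \<le> 4 * B^2 * (xtil q k x I $ i)^2"
proof -
  have "csq (gtil q k w ((x, y), (I, j))) $ i = (phitil w x y j)^2 * (xtil q k x I $ i)^2"
    by (simp add: gtil_def power_mult_distrib)
  also have "\<dots> \<le> 4 * B^2 * (xtil q k x I $ i)^2"
    using phitil_sq_le[of x j y B w] assms by (intro mult_right_mono) auto
  finally show ?thesis .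
qed

section \<open>Sums of independent samples\<close>

lemma finite_set_Pi_pmf:
  assumes "finite A" "\<And>x. x \<in> A \<Longrightarrow> finite (set_pmf (p x))"
  shows "finite (set_pmf (Pi_pmf A dflt p))"
  by (rule finite_subset[OF set_Pi_pmf_subset'[OF assms(1)]], rule finite_PiE_dflt)
     (simp_all add: assms)

lemma expectation_pair_pmf_mult:
  fixes f :: "'a \<Rightarrow> real" and g :: "'b \<Rightarrow> real"
  assumes A: "finite (set_pmf A)" and B: "finite (set_pmf B)"
  shows "measure_pmf.expectation (pair_pmf A B) (\<lambda>z. f (fst z) * g (snd z))
       = measure_pmf.expectation A f * measure_pmf.expectation B g"
proof -
  have "measure_pmf.expectation (pair_pmf A B) (\<lambda>z. f (fst z) * g (snd z))
      = (\<Sum>z\<in>set_pmf A \<times> set_pmf B. f (fst z) * g (snd z) * pmf (pair_pmf A B) z)"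
    by (rule integral_measure_pmf_real) (auto simp: A B)
  also have "\<dots> = (\<Sum>a\<in>set_pmf A. \<Sum>b\<in>set_pmf B. (f a * pmf A a) * (g b * pmf B b))"
    unfolding sum.cartesian_product by (rule sum.cong) (auto simp: pmf_pair mult_ac)
  also have "\<dots> = (\<Sum>a\<in>set_pmf A. f a * pmf A a) * (\<Sum>b\<in>set_pmf B. g b * pmf B b)"
    by (simp add: sum_product)
  also have "(\<Sum>a\<in>set_pmf A. f a * pmf A a) = measure_pmf.expectation A f"
    by (rule integral_measure_pmf_real[symmetric]) (auto simp: A)
  also have "(\<Sum>b\<in>set_pmf B. g b * pmf B b) = measure_pmf.expectation B g"
    by (rule integral_measure_pmf_real[symmetric]) (auto simp: B)
  finally show ?thesis .
qed

lemma expectation_Pi_pmf_component: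
  fixes f :: "'b \<Rightarrow> real"
  assumes "finite A" "r \<in> A"
  shows "measure_pmf.expectation (Pi_pmf A dflt p) (\<lambda>I. f (I r)) = measure_pmf.expectation (p r) f"
proof -
  have "measure_pmf.expectation (Pi_pmf A dflt p) (\<lambda>I. f (I r))
      = measure_pmf.expectation (map_pmf (\<lambda>I. I r) (Pi_pmf A dflt p)) f"
    by simp
  also have "map_pmf (\<lambda>I. I r) (Pi_pmf A dflt p) = p r"
    using Pi_pmf_component[OF assms(1), of r dflt p] assms(2) by simp
  finally show ?thesis .
qed

lemma expectation_Pi_pmf_sum:
  fixes a :: "'a \<Rightarrow> real"
  assumes "finite (set_pmf q)"
  shows "measure_pmf.expectation (Pi_pmf {..<k} dflt (\<lambda>_. q)) (\<lambda>I. \<Sum>r<k. a (I r))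
       = real k * measure_pmf.expectation q a"
proof -
  have "finite (set_pmf (Pi_pmf {..<k} dflt (\<lambda>_. q)))"
    using assms by (intro finite_set_Pi_pmf) auto
  then have "measure_pmf.expectation (Pi_pmf {..<k} dflt (\<lambda>_. q)) (\<lambda>I. \<Sum>r<k. a (I r))
       = (\<Sum>r<k. measure_pmf.expectation (Pi_pmf {..<k} dflt (\<lambda>_. q)) (\<lambda>I. a (I r)))"
    by (intro Bochner_Integration.integral_sum integrable_measure_pmf_finite)
  also have "\<dots> = (\<Sum>r<k. measure_pmf.expectation q a)"
    by (intro sum.cong refl expectation_Pi_pmf_component) auto
  also have "\<dots> = real k * measure_pmf.expectation q a"
    by simp
  finally show ?thesis .
qed

lemma expectation_Pi_pmf_sum_sq:
  fixes a :: "'a \<Rightarrow> real"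
  assumes q: "finite (set_pmf q)"
  defines "m \<equiv> measure_pmf.expectation q a"
    and "v \<equiv> measure_pmf.expectation q (\<lambda>i. (a i)^2)"
  shows "measure_pmf.expectation (Pi_pmf {..<k} dflt (\<lambda>_. q)) (\<lambda>I. (\<Sum>r<k. a (I r))^2)
       = real k * v + real k * (real k - 1) * m^2"
proof (induction k)
  case 0
  then show ?case by simp
next
  case (Suc k)
  let ?P = "Pi_pmf {..<k} dflt (\<lambda>_. q)"
  let ?Q = "pair_pmf q ?P"
  let ?S = "\<lambda>I. \<Sum>r<k. a (I r)"
  have P: "finite (set_pmf ?P)"
    using q by (intro finite_set_Pi_pmf) auto
  have int: "integrable (measure_pmf ?Q) g" for g :: "_ \<Rightarrow> real"
    using q P by (intro integrable_measure_pmf_finite) simp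
  have Pi_Suc: "Pi_pmf {..<Suc k} dflt (\<lambda>_. q) = map_pmf (\<lambda>(y, I). I(k := y)) ?Q"
    using Pi_pmf_insert[of "{..<k}" k dflt "\<lambda>_. q"] by (simp add: lessThan_Suc)
  have sum_upd: "(\<Sum>r<Suc k. a ((I(k := y)) r)) = a y + ?S I" for I y
    by (simp add: sum.cong[of "{..<k}" _ "\<lambda>r. a ((I(k := y)) r)" "\<lambda>r. a (I r)"])
  have expand: "(\<lambda>z. (a (fst z) + ?S (snd z))^2)
      = (\<lambda>z. (a (fst z))^2 + 2 * (a (fst z) * ?S (snd z)) + (?S (snd z))^2)"
    by (simp add: power2_eq_square algebra_simps)
  have "measure_pmf.expectation ?Q (\<lambda>z. (a (fst z) + ?S (snd z))^2)
      = measure_pmf.expectation ?Q (\<lambda>z. (a (fst z))^2)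
        + 2 * measure_pmf.expectation ?Q (\<lambda>z. a (fst z) * ?S (snd z))
        + measure_pmf.expectation ?Q (\<lambda>z. (?S (snd z))^2)"
    unfolding expand by (simp only: Bochner_Integration.integral_add int integral_mult_right_zero)
  also have "\<dots> = v + 2 * (m * (real k * m)) + (real k * v + real k * (real k - 1) * m^2)"
    using expectation_pair_pmf_fst[of q ?P "\<lambda>y. (a y)^2"]
          expectation_pair_pmf_snd[of q ?P "\<lambda>I. (?S I)^2"]
          expectation_pair_pmf_mult[OF q P, of a ?S] expectation_Pi_pmf_sum[OF q, of k dflt a]
    by (simp only: Suc.IH m_def v_def)
  finally show ?case
    unfolding Pi_Suc integral_map_pmf
    by (simp add: case_prod_unfold sum_upd algebra_simps power2_eq_square)
qed

lemma xtil_r_nth: "xtil_r q x l $ i = (if l = i then x$i / pmf q i else 0)"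
  by (simp add: xtil_r_def axis_def)

lemma xtil_nth: "xtil q k x I $ i = (\<Sum>r<k. xtil_r q x (I r) $ i) / real k"
  by (simp add: xtil_def sum_component)

lemma expectation_xtil_r_nth:
  "measure_pmf.expectation q (\<lambda>l. xtil_r q x l $ i) = (if pmf q i = 0 then 0 else x$i)"
  by (subst integral_measure_pmf_real[where A="{i}"]) (auto simp: xtil_r_nth split: if_splits)

lemma expectation_xtil_r_nth_sq:
  "measure_pmf.expectation q (\<lambda>l. (xtil_r q x l $ i)^2) = (x$i)^2 / pmf q i"
  by (subst integral_measure_pmf_real[where A="{i}"])
     (auto simp: xtil_r_nth power_divide power2_eq_square split: if_splits)

lemma expectation_xtil_nth_sq_le:
  assumes k: "0 < k" and x: "\<bar>x$i\<bar> \<le> 1"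
  shows "measure_pmf.expectation (Pi_pmf {..<k} dflt (\<lambda>_. q)) (\<lambda>I. (xtil q k x I $ i)^2)
         \<le> (x$i)^2 / pmf q i / real k + 1"
proof -
  define m where "m = (if pmf q i = 0 then 0 else x$i)"
  define v where "v = (x$i)^2 / pmf q i"
  have "m^2 \<le> 1"
    using x abs_square_le_1 by (auto simp: m_def)
  have "measure_pmf.expectation (Pi_pmf {..<k} dflt (\<lambda>_. q)) (\<lambda>I. (xtil q k x I $ i)^2)
      = (real k * v + real k * (real k - 1) * m^2) / (real k)^2"
    using expectation_Pi_pmf_sum_sq[where q=q and a="\<lambda>l. xtil_r q x l $ i" and k=k and dflt=dflt]
    by (simp add: xtil_nth power_divide expectation_xtil_r_nth expectation_xtil_r_nth_sq m_def v_def)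
  also have "\<dots> = v / real k + (1 - 1 / real k) * m^2"
    using k by (simp add: field_simps power2_eq_square)
  also have "\<dots> \<le> v / real k + 1"
    using \<open>m^2 \<le> 1\<close> k
    by (simp add: mult_le_one)
  finally show ?thesis by (simp add: v_def)
qed

lemma abs_xtil_r_nth_le: "\<bar>x$i\<bar> \<le> 1 \<Longrightarrow> \<bar>xtil_r q x l $ i\<bar> \<le> 1 / pmf q i"
  by (auto simp: xtil_r_nth abs_divide divide_right_mono)

lemma abs_xtil_nth_le:
  assumes "\<bar>x$i\<bar> \<le> 1" shows "\<bar>xtil q k x I $ i\<bar> \<le> 1 / pmf q i"
proof -
  have "\<bar>\<Sum>r<k. xtil_r q x (I r) $ i\<bar> \<le> (\<Sum>r<k. \<bar>xtil_r q x (I r) $ i\<bar>)"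
    by (rule sum_abs)
  also have "\<dots> \<le> real k * (1 / pmf q i)"
    using sum_bounded_above[of "{..<k}" "\<lambda>r. \<bar>xtil_r q x (I r) $ i\<bar>" "1 / pmf q i"]
          abs_xtil_r_nth_le[OF assms] by simp
  finally have "\<bar>\<Sum>r<k. xtil_r q x (I r) $ i\<bar> \<le> real k * (1 / pmf q i)" .
  then show ?thesis
    by (cases "k = 0") (simp_all add: xtil_nth abs_divide field_simps)
qed

lemma integrable_vec_lambda_nth:
  fixes f :: "'a \<Rightarrow> real^'n::finite"
  assumes "\<And>i. integrable M (\<lambda>x. f x $ i)"
  shows "integrable M f"
proof -
  have eq: "f = (\<lambda>x. \<Sum>i\<in>UNIV. (f x $ i) *\<^sub>R axis i 1)"
    by (rule ext) (simp add: vec_eq_iff axis_def sum_component if_distrib cong: if_cong)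
  show ?thesis
    by (subst eq) (auto intro!: integrable_sum integrable_scaleR_left assms)
qed

lemma integral_vec_nth:
  fixes f :: "'a \<Rightarrow> real^'n::finite"
  assumes "integrable M f"
  shows "(\<integral>x. f x \<partial>M) $ i = (\<integral>x. f x $ i \<partial>M)"
  using integral_bounded_linear[OF bounded_linear_vec_nth assms, of i] by simp

lemma integral_vec_nth_nonneg:
  fixes f :: "'a \<Rightarrow> real^'n::finite"
  assumes "\<And>x. 0 \<le> f x $ i"
  shows "0 \<le> (\<integral>x. f x \<partial>M) $ i"
  by (cases "integrable M f") (simp_all add: integral_vec_nth assms not_integrable_integral_eq)

lemma (in prob_space) integral_vec_nth_le_const:
  fixes f :: "'a \<Rightarrow> real^'n::finite"
  assumes "\<And>x. f x $ i \<le> C" and "0 \<le> C"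
  shows "(\<integral>x. f x \<partial>M) $ i \<le> C"
proof (cases "integrable M f")
  case True
  have "(\<integral>x. f x \<partial>M) $ i = (\<integral>x. f x $ i \<partial>M)"
    by (rule integral_vec_nth[OF True])
  also have "\<dots> \<le> (\<integral>x. C \<partial>M)"
    by (intro integral_mono integrable_bounded_linear[OF bounded_linear_vec_nth True] assms) simp
  finally show ?thesis by (simp add: prob_space)
qed (simp add: not_integrable_integral_eq assms)

lemma AE_pair_measure_fst:
  assumes "sigma_finite_measure M2" and "AE x in M1. P x"
  shows "AE z in M1 \<Otimes>\<^sub>M M2. P (fst z)"
proof -
  from assms(2) obtain N where N: "N \<in> null_sets M1" "{x \<in> space M1. \<not> P x} \<subseteq> N"
    by (auto elim!: AE_E)
  have "N \<times> space M2 \<in> null_sets (M1 \<Otimes>\<^sub>M M2)"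
    by (rule sigma_finite_measure.times_in_null_sets1[OF assms(1) N(1)]) simp
  moreover have "{z \<in> space (M1 \<Otimes>\<^sub>M M2). \<not> P (fst z)} \<subseteq> N \<times> space M2"
    using N(2) by (auto simp: space_pair_measure)
  ultimately show ?thesis by (rule AE_I')
qed

lemma borel_measurable_vec_nth [measurable (raw)]:
  "f \<in> borel_measurable M \<Longrightarrow> (\<lambda>x. (f x :: real^'n) $ i) \<in> borel_measurable M"
proof -
  assume f: "f \<in> borel_measurable M"
  have "(\<lambda>x. f x \<bullet> axis i 1) \<in> borel_measurable M" using f by measurable
  then show ?thesis by (simp add: inner_axis)
qed

lemma borel_measurable_vec_lambda:
  fixes g :: "'a \<Rightarrow> 'n::finite \<Rightarrow> real"
  assumes "\<And>i. (\<lambda>x. g x i) \<in> borel_measurable M"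
  shows "(\<lambda>x. \<chi> i. g x i) \<in> borel_measurable M"
proof (subst borel_measurable_euclidean_space, intro ballI)
  fix b :: "real^'n" assume "b \<in> Basis"
  then obtain j where b: "b = axis j 1" by (auto simp: Basis_vec_def)
  show "(\<lambda>x. (\<chi> i. g x i) \<bullet> b) \<in> borel_measurable M"
    using assms[of j] by (simp add: b inner_axis)
qed

section \<open>Measurability of the algorithm\<close>

lemma borel_measurable_csq [measurable (raw)]:
  "f \<in> borel_measurable M \<Longrightarrow> (\<lambda>x. csq (f x :: real^'n)) \<in> borel_measurable M"
  unfolding csq_def by (rule borel_measurable_vec_lambda) measurable

lemma borel_measurable_l1norm [measurable (raw)]:
  "f \<in> borel_measurable M \<Longrightarrow> (\<lambda>x. l1norm (f x :: real^'n)) \<in> borel_measurable M"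
  unfolding l1norm_def by measurable

lemma borel_measurable_weight [measurable (raw)]:
  assumes "S \<in> borel_measurable M"
  shows "(\<lambda>x. weight B (S x :: (real^'n) \<times> (real^'n))) \<in> borel_measurable M"
proof -
  have [measurable]: "S \<in> M \<rightarrow>\<^sub>M borel \<Otimes>\<^sub>M borel" using assms by (simp add: borel_prod)
  show ?thesis unfolding weight_def by measurable
qed

lemma borel_measurable_next_state:
  assumes S: "S \<in> borel_measurable M" and [measurable]: "G \<in> borel_measurable M"
  shows "(\<lambda>x. next_state \<eta> (S x :: (real^'n::finite) \<times> (real^'n)) (G x)) \<in> borel_measurable M"
proof -
  have [measurable]: "S \<in> M \<rightarrow>\<^sub>M borel \<Otimes>\<^sub>M borel" using S by (simp add: borel_prod)
  have "(\<lambda>x. fst (next_state \<eta> (S x) (G x))) \<in> borel_measurable M"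
    "(\<lambda>x. snd (next_state \<eta> (S x) (G x))) \<in> borel_measurable M"
    unfolding next_state_def Let_def clip_def
    by (simp_all, (rule borel_measurable_vec_lambda, measurable)+)
  then have "(\<lambda>x. (fst (next_state \<eta> (S x) (G x)), snd (next_state \<eta> (S x) (G x))))
      \<in> M \<rightarrow>\<^sub>M borel \<Otimes>\<^sub>M borel"
    by (rule measurable_Pair)
  then show ?thesis by (simp add: borel_prod)
qed

lemma borel_measurable_xtil_r:
  assumes [measurable]: "X \<in> borel_measurable M" and L: "L \<in> M \<rightarrow>\<^sub>M count_space UNIV"
  shows "(\<lambda>\<omega>. xtil_r q (X \<omega> :: real^'n::finite) (L \<omega>)) \<in> borel_measurable M"
  unfolding xtil_r_def
  by (rule measurable_compose_countable[where f="\<lambda>c \<omega>. (X \<omega> $ c / pmf q c) *\<^sub>R axis c 1", OF _ L])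
     measurable

lemma borel_measurable_xtil:
  assumes "X \<in> borel_measurable M" and "\<And>r. (\<lambda>\<omega>. I \<omega> r) \<in> M \<rightarrow>\<^sub>M count_space UNIV"
  shows "(\<lambda>\<omega>. xtil q k (X \<omega> :: real^'n::finite) (I \<omega>)) \<in> borel_measurable M"
proof -
  have [measurable]: "(\<lambda>\<omega>. xtil_r q (X \<omega>) (I \<omega> r)) \<in> borel_measurable M" for r
    using assms by (rule borel_measurable_xtil_r)
  show ?thesis unfolding xtil_def by measurable
qed

lemma borel_measurable_gtil:
  assumes [measurable]: "W \<in> borel_measurable M" "X \<in> borel_measurable M" "Y \<in> borel_measurable M"
    and I: "\<And>r. (\<lambda>\<omega>. I \<omega> r) \<in> M \<rightarrow>\<^sub>M count_space UNIV"
    and J: "J \<in> M \<rightarrow>\<^sub>M count_space UNIV"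
  shows "(\<lambda>\<omega>. gtil q k (W \<omega> :: real^'n::finite) ((X \<omega>, Y \<omega>), (I \<omega>, J \<omega>))) \<in> borel_measurable M"
proof -
  have [measurable]: "(\<lambda>\<omega>. xtil q k (X \<omega>) (I \<omega>)) \<in> borel_measurable M"
    by (rule borel_measurable_xtil[OF assms(2) I])
  have [measurable]: "(\<lambda>\<omega>. phitil (W \<omega>) (X \<omega>) (Y \<omega>) (J \<omega>)) \<in> borel_measurable M"
    unfolding phitil_def importance_weight_jdist
    by (rule measurable_compose_countable[
          where f="\<lambda>c \<omega>. sgn (W \<omega> $ c) * l1norm (W \<omega>) * X \<omega> $ c - Y \<omega>", OF _ J])
       measurable
  show ?thesis unfolding gtil_def by simp measurable
qed

definition outcome_measure :: "'n::finite outcome measure" where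
  "outcome_measure = (borel \<Otimes>\<^sub>M borel) \<Otimes>\<^sub>M (count_space UNIV \<Otimes>\<^sub>M count_space UNIV)"

lemma sets_step_space:
  assumes "sets D = sets borel"
  shows "sets (step_space D q k w) = sets outcome_measure"
proof -
  have "sets D = sets (borel \<Otimes>\<^sub>M borel)" using assms by (simp only: borel_prod)
  then show ?thesis unfolding step_space_def outcome_measure_def
    by (intro sets_pair_measure_cong) (simp_all add: sets_measure_pmf_count_space)
qed

lemma prob_space_step_space: "prob_space D \<Longrightarrow> prob_space (step_space D q k w)"
  unfolding step_space_def by (intro prob_space_pair prob_space_measure_pmf)

lemma measurable_outcome_measure:
  "(\<lambda>\<omega>. fst (fst \<omega>)) \<in> borel_measurable (outcome_measure :: 'n::finite outcome measure)"
  "(\<lambda>\<omega>. snd (fst \<omega>)) \<in> borel_measurable (outcome_measure :: 'n outcome measure)"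
  "(\<lambda>\<omega>. fst (snd \<omega>) r) \<in> (outcome_measure :: 'n outcome measure) \<rightarrow>\<^sub>M count_space UNIV"
  "(\<lambda>\<omega>. snd (snd \<omega>)) \<in> (outcome_measure :: 'n outcome measure) \<rightarrow>\<^sub>M count_space UNIV"
proof -
  have "(\<lambda>I::nat \<Rightarrow> 'n. I r) \<in> count_space UNIV \<rightarrow>\<^sub>M count_space UNIV" by simp
  then show "(\<lambda>\<omega>. fst (snd \<omega>) r) \<in> (outcome_measure :: 'n outcome measure) \<rightarrow>\<^sub>M count_space UNIV"
    unfolding outcome_measure_def by measurable
qed (unfold outcome_measure_def, measurable)+

lemma borel_measurable_step_space:
  "sets D = sets borel \<Longrightarrow> f \<in> borel_measurable outcome_measure
     \<Longrightarrow> f \<in> borel_measurable (step_space D q k w)"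
  by (subst measurable_cong_sets[OF sets_step_space refl])

lemma borel_measurable_gtil_outcome:
  "gtil q k w \<in> borel_measurable (outcome_measure :: 'n::finite outcome measure)"
  using borel_measurable_gtil[where W="\<lambda>_. w" and X="\<lambda>\<omega>. fst (fst \<omega>)" and Y="\<lambda>\<omega>. snd (fst \<omega>)"
      and I="\<lambda>\<omega>. fst (snd \<omega>)" and J="\<lambda>\<omega>. snd (snd \<omega>)" and q=q and k=k]
  by (simp add: measurable_outcome_measure)

lemma borel_measurable_gtil_weight:
  "(\<lambda>p. gtil q k (weight B (fst p)) (snd p))
     \<in> borel_measurable (borel \<Otimes>\<^sub>M (outcome_measure :: 'n::finite outcome measure))"
  using borel_measurable_gtil[where W="\<lambda>p. weight B (fst p)" and X="\<lambda>p. fst (fst (snd p))"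
      and Y="\<lambda>p. snd (fst (snd p))" and I="\<lambda>p. fst (snd (snd p))" and J="\<lambda>p. snd (snd (snd p))"
      and q=q and k=k and M="borel \<Otimes>\<^sub>M outcome_measure"]
  by (simp add: borel_measurable_weight[OF measurable_fst]
      measurable_compose[OF measurable_snd measurable_outcome_measure(1)]
      measurable_compose[OF measurable_snd measurable_outcome_measure(2)]
      measurable_compose[OF measurable_snd measurable_outcome_measure(3)]
      measurable_compose[OF measurable_snd measurable_outcome_measure(4)])

lemma measurable_jdist_kernel:
  assumes [measurable]: "W \<in> borel_measurable M"
  shows "(\<lambda>s. measure_pmf (jdist (W s :: real^'n::finite)))
           \<in> M \<rightarrow>\<^sub>M subprob_algebra (count_space UNIV)"
proof (rule measurable_subprob_algebra)
  fix a
  show "subprob_space (measure_pmf (jdist (W a)))"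
    by (rule prob_space_imp_subprob_space) (rule prob_space_measure_pmf)
  show "sets (measure_pmf (jdist (W a))) = sets (count_space UNIV)" by simp
next
  fix A :: "'n set"
  have [measurable]: "Measurable.pred M (\<lambda>x. W x = 0)"
    by (rule pred_eq_const1[OF assms]) simp
  have "(\<lambda>a. ennreal (\<Sum>s\<in>A. pmf (jdist (W a)) s)) \<in> borel_measurable M"
    unfolding pmf_jdist by measurable
  then show "(\<lambda>a. emeasure (measure_pmf (jdist (W a))) A) \<in> borel_measurable M"
    by (simp add: emeasure_measure_pmf_finite)
qed

lemma measurable_step_space_kernel:
  assumes [measurable]: "W \<in> borel_measurable M" and D: "prob_space D" "sets D = sets borel"
  shows "(\<lambda>s. step_space D q k (W s :: real^'n::finite)) \<in> M \<rightarrow>\<^sub>M subprob_algebra outcome_measure"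
proof -
  have "sets D = sets (borel \<Otimes>\<^sub>M borel)" using D(2) by (simp only: borel_prod)
  then have eq: "subprob_algebra outcome_measure
      = subprob_algebra (D \<Otimes>\<^sub>M (count_space UNIV \<Otimes>\<^sub>M count_space UNIV))"
    unfolding outcome_measure_def by (intro subprob_algebra_cong sets_pair_measure_cong) simp_all
  have "(\<lambda>s. D) \<in> M \<rightarrow>\<^sub>M subprob_algebra D"
    by (rule measurable_const) (simp add: space_subprob_algebra D prob_space_imp_subprob_space)
  moreover have "(\<lambda>s. measure_pmf (Pi_pmf {..<k} undefined (\<lambda>_. q)))
      \<in> M \<rightarrow>\<^sub>M subprob_algebra (count_space UNIV)"
    by (rule measurable_const) (rule measure_pmf_in_subprob_algebra)
  ultimately show ?thesis
    unfolding eq step_space_def by (intro measurable_pair_measure measurable_jdist_kernel assms)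
qed

lemma measurable_state_transition:
  assumes D: "prob_space D" "sets D = sets borel"
  shows "(\<lambda>s. distr (step_space D q k (weight B s)) borel
               (\<lambda>\<omega>. next_state \<eta> s (gtil q k (weight B s) \<omega>)))
           \<in> borel \<rightarrow>\<^sub>M prob_algebra (borel :: ((real^'n::finite) \<times> (real^'n)) measure)"
proof (rule measurable_prob_algebraI)
  fix s :: "(real^'n) \<times> (real^'n)"
  have "(\<lambda>\<omega>. next_state \<eta> s (gtil q k (weight B s) \<omega>)) \<in> borel_measurable outcome_measure"
    by (rule borel_measurable_next_state[OF borel_measurable_const borel_measurable_gtil_outcome])
  then have "(\<lambda>\<omega>. next_state \<eta> s (gtil q k (weight B s) \<omega>))
      \<in> borel_measurable (step_space D q k (weight B s))"
    by (subst measurable_cong_sets[OF sets_step_space[OF D(2)] refl])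
  then show "prob_space (distr (step_space D q k (weight B s)) borel
      (\<lambda>\<omega>. next_state \<eta> s (gtil q k (weight B s) \<omega>)))"
    by (rule prob_space.prob_space_distr[OF prob_space_step_space[OF D(1)]])
next
  have "(\<lambda>p. next_state \<eta> (fst p) (gtil q k (weight B (fst p)) (snd p)))
      \<in> borel_measurable (borel \<Otimes>\<^sub>M (outcome_measure :: 'n outcome measure))"
    by (rule borel_measurable_next_state[OF measurable_fst borel_measurable_gtil_weight])
  then show "(\<lambda>s. distr (step_space D q k (weight B s)) borel
      (\<lambda>\<omega>. next_state \<eta> s (gtil q k (weight B s) \<omega>))) \<in> borel \<rightarrow>\<^sub>M subprob_algebra borel"
    by (intro measurable_distr2[where M=outcome_measure]
          measurable_step_space_kernel[OF borel_measurable_weight[OF measurable_ident_sets[OF refl]] D])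
       (simp add: case_prod_beta)
qed

lemma prob_space_state_dist:
  fixes D :: "((real^'n::finite) \<times> real) measure"
  assumes D: "prob_space D" "sets D = sets borel"
  shows "prob_space (state_dist D q k B \<eta> t)"
proof -
  have "state_dist D q k B \<eta> t \<in> space (prob_algebra borel)"
  proof (induction t)
    case 0
    then show ?case by (simp add: space_prob_algebra prob_space_return)
  next
    case (Suc t)
    show ?case
      using measurable_bind_prob_space[OF measurable_const[OF Suc.IH] measurable_state_transition[OF D],
              THEN measurable_space, of undefined "count_space UNIV"]
      by simp
  qed
  then show ?thesis by (simp add: space_prob_algebra)
qed

lemma AE_step_space_data:
  assumes "AE xy in D. linfnorm (fst xy) \<le> 1 \<and> \<bar>snd xy\<bar> \<le> B"
  shows "AE \<omega> in step_space D q k w. (\<forall>j. \<bar>fst (fst \<omega>) $ j\<bar> \<le> 1) \<and> \<bar>snd (fst \<omega>)\<bar> \<le> B"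
proof -
  interpret M2: prob_space "measure_pmf (Pi_pmf {..<k} undefined (\<lambda>_. q)) \<Otimes>\<^sub>M measure_pmf (jdist w)"
    by (intro prob_space_pair prob_space_measure_pmf)
  have "AE xy in D. (\<forall>j. \<bar>fst xy $ j\<bar> \<le> 1) \<and> \<bar>snd xy\<bar> \<le> B"
    using assms by eventually_elim (auto intro: abs_nth_le_of_linfnorm_le)
  then show ?thesis
    unfolding step_space_def by (rule AE_pair_measure_fst[rotated]) unfold_locales
qed

lemma step_space_integral_samples:
  fixes f :: "(real^'n::finite) \<times> real \<Rightarrow> (nat \<Rightarrow> 'n) \<Rightarrow> real"
  assumes D: "prob_space D"
    and int: "integrable (step_space D q k w) (\<lambda>\<omega>. f (fst \<omega>) (fst (snd \<omega>)))"
  defines "P \<equiv> measure_pmf (Pi_pmf {..<k} undefined (\<lambda>_. q))"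
  shows "(\<integral>\<omega>. f (fst \<omega>) (fst (snd \<omega>)) \<partial>step_space D q k w) = (\<integral>x. (\<integral>I. f x I \<partial>P) \<partial>D)"
    and "integrable D (\<lambda>x. \<integral>I. f x I \<partial>P)"
proof -
  let ?M2 = "P \<Otimes>\<^sub>M measure_pmf (jdist w)"
  interpret D: prob_space D by (rule D)
  interpret M2: prob_space ?M2 unfolding P_def by (intro prob_space_pair prob_space_measure_pmf)
  interpret pair_sigma_finite D ?M2 ..
  have int': "integrable (D \<Otimes>\<^sub>M ?M2) (\<lambda>\<omega>. f (fst \<omega>) (fst (snd \<omega>)))"
    using int by (simp add: step_space_def P_def)
  have inner: "(\<integral>y. f x (fst y) \<partial>?M2) = (\<integral>I. f x I \<partial>P)" for x
  proof -
    have "(\<integral>y. f x (fst y) \<partial>?M2) = (\<integral>I. f x I \<partial>distr ?M2 P fst)"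
      by (rule integral_distr[symmetric]) (auto simp: P_def)
    also have "distr ?M2 P fst = P"
      unfolding P_def by (rule prob_space.distr_pair_fst) (rule prob_space_measure_pmf)
    finally show ?thesis .
  qed
  show "(\<integral>\<omega>. f (fst \<omega>) (fst (snd \<omega>)) \<partial>step_space D q k w) = (\<integral>x. (\<integral>I. f x I \<partial>P) \<partial>D)"
    using integral_fst'[OF int'] by (simp add: step_space_def P_def[symmetric] inner)
  show "integrable D (\<lambda>x. \<integral>I. f x I \<partial>P)"
    using integrable_fst'[OF int'] by (simp add: inner)
qed

definition sample_sq_moment :: "((real^'n) \<times> real) measure \<Rightarrow> 'n pmf \<Rightarrow> real^'n" where
  "sample_sq_moment D q = (\<chi> i. \<integral>xy. (fst xy $ i)^2 / pmf q i \<partial>D)"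

lemma integrable_sample_sq_moment:
  fixes D :: "((real^'n) \<times> real) measure"
  assumes D: "prob_space D" "sets D = sets borel"
    and data: "AE xy in D. linfnorm (fst xy) \<le> 1 \<and> \<bar>snd xy\<bar> \<le> B"
  shows "integrable D (\<lambda>xy. (fst xy $ i)^2 / pmf q i)"
proof (rule finite_measure.integrable_const_bound[where B="1 / pmf q i"])
  show "finite_measure D"
    using D(1) by (rule prob_space.finite_measure)
  show "AE xy in D. norm ((fst xy $ i)^2 / pmf q i) \<le> 1 / pmf q i"
    using data by eventually_elim
      (auto intro!: divide_right_mono simp: abs_square_le_1 dest: abs_nth_le_of_linfnorm_le)
  have "sets D = sets (borel \<Otimes>\<^sub>M borel)"
    using D(2) by (simp only: borel_prod)
  then show "(\<lambda>xy. (fst xy $ i)^2 / pmf q i) \<in> borel_measurable D"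
    by (subst measurable_cong_sets[OF _ refl]) measurable
qed

lemma integrable_step_space_xtil_nth_sq:
  assumes D: "prob_space D" "sets D = sets borel"
    and data: "AE xy in D. linfnorm (fst xy) \<le> 1 \<and> \<bar>snd xy\<bar> \<le> B"
  shows "integrable (step_space D q k w) (\<lambda>\<omega>. (xtil q k (fst (fst \<omega>)) (fst (snd \<omega>)) $ i)^2)"
proof (rule finite_measure.integrable_const_bound[where B="(1 / pmf q i)^2"])
  show "finite_measure (step_space D q k w)"
    using prob_space_step_space[OF D(1)] by (rule prob_space.finite_measure)
  show "AE \<omega> in step_space D q k w.
      norm ((xtil q k (fst (fst \<omega>)) (fst (snd \<omega>)) $ i)^2) \<le> (1 / pmf q i)^2"
    using AE_step_space_data[OF data]
    by eventually_elim (auto simp: abs_le_square_iff[symmetric] intro: abs_xtil_nth_le)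
  show "(\<lambda>\<omega>. (xtil q k (fst (fst \<omega>)) (fst (snd \<omega>)) $ i)^2) \<in> borel_measurable (step_space D q k w)"
    by (intro borel_measurable_step_space[OF D(2)] borel_measurable_power borel_measurable_vec_nth
        borel_measurable_xtil measurable_outcome_measure)
qed

lemma step_space_integral_csq_xtil_r:
  assumes D: "prob_space D" "sets D = sets borel" and r: "r < k"
    and data: "AE xy in D. linfnorm (fst xy) \<le> 1 \<and> \<bar>snd xy\<bar> \<le> B"
  shows "(\<integral>\<omega>. csq (xtil_r q (fst (fst \<omega>)) (fst (snd \<omega>) r)) \<partial>step_space D q k w)
           = sample_sq_moment D q"
proof -
  let ?N = "step_space D q k w"
  interpret N: prob_space ?N by (rule prob_space_step_space[OF D(1)])
  have int: "integrable ?N (\<lambda>\<omega>. (xtil_r q (fst (fst \<omega>)) (fst (snd \<omega>) r) $ i)^2)" for i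
  proof (rule N.integrable_const_bound[where B="(1 / pmf q i)^2"])
    show "AE \<omega> in ?N. norm ((xtil_r q (fst (fst \<omega>)) (fst (snd \<omega>) r) $ i)^2) \<le> (1 / pmf q i)^2"
      using AE_step_space_data[OF data]
      by eventually_elim (auto simp: abs_le_square_iff[symmetric] intro: abs_xtil_r_nth_le)
    show "(\<lambda>\<omega>. (xtil_r q (fst (fst \<omega>)) (fst (snd \<omega>) r) $ i)^2) \<in> borel_measurable ?N"
      by (intro borel_measurable_step_space[OF D(2)] borel_measurable_power borel_measurable_vec_nth
          borel_measurable_xtil_r measurable_outcome_measure)
  qed
  have sample: "measure_pmf.expectation (Pi_pmf {..<k} undefined (\<lambda>_. q))
      (\<lambda>I. (xtil_r q x (I r) $ i)^2) = (x$i)^2 / pmf q i" for x i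
    using expectation_Pi_pmf_component[of "{..<k}" r undefined "\<lambda>_. q" "\<lambda>l. (xtil_r q x l $ i)^2"] r
    by (simp add: expectation_xtil_r_nth_sq)
  have "(\<integral>\<omega>. (xtil_r q (fst (fst \<omega>)) (fst (snd \<omega>) r) $ i)^2 \<partial>?N) = sample_sq_moment D q $ i" for i
    using step_space_integral_samples(1)[OF D(1) int[of i]]
    by (simp add: sample_sq_moment_def sample)
  then show ?thesis
    using int by (simp add: vec_eq_iff integral_vec_nth integrable_vec_lambda_nth)
qed

lemma step_space_integral_csq_gtil_le:
  assumes D: "prob_space D" "sets D = sets borel" and k: "0 < k"
    and data: "AE xy in D. linfnorm (fst xy) \<le> 1 \<and> \<bar>snd xy\<bar> \<le> B" and w: "l1norm w \<le> B"
  shows "(\<integral>\<omega>. csq (gtil q k w \<omega>) \<partial>step_space D q k w) $ i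
           \<le> 4 * B^2 * (sample_sq_moment D q $ i / real k + 1)"
proof -
  let ?N = "step_space D q k w"
  let ?P = "measure_pmf (Pi_pmf {..<k} undefined (\<lambda>_. q))"
  let ?xsq = "\<lambda>j x I. (xtil q k x I $ j)^2"
  interpret D: prob_space D by (rule D(1))
  note int_xsq = integrable_step_space_xtil_nth_sq[OF D data]
  note int_moment = integrable_sample_sq_moment[OF D data]
  have gtil_le: "AE \<omega> in ?N. csq (gtil q k w \<omega>) $ j \<le> 4 * B^2 * ?xsq j (fst (fst \<omega>)) (fst (snd \<omega>))"
    for j
    using AE_step_space_data[OF data] by eventually_elim (metis csq_gtil_le prod.collapse w)
  have int_gtil: "integrable ?N (\<lambda>\<omega>. csq (gtil q k w \<omega>) $ j)" for j
  proof (rule Bochner_Integration.integrable_bound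
      [where f="\<lambda>\<omega>. 4 * B^2 * ?xsq j (fst (fst \<omega>)) (fst (snd \<omega>))"])
    show "integrable ?N (\<lambda>\<omega>. 4 * B^2 * ?xsq j (fst (fst \<omega>)) (fst (snd \<omega>)))"
      using int_xsq[where i=j] by simp
    show "AE \<omega> in ?N. norm (csq (gtil q k w \<omega>) $ j)
        \<le> norm (4 * B^2 * ?xsq j (fst (fst \<omega>)) (fst (snd \<omega>)))"
      using gtil_le[of j] by eventually_elim simp
    show "(\<lambda>\<omega>. csq (gtil q k w \<omega>) $ j) \<in> borel_measurable ?N"
      by (intro borel_measurable_step_space[OF D(2)] borel_measurable_vec_nth borel_measurable_csq
          borel_measurable_gtil_outcome)
  qed
  have "(\<integral>\<omega>. csq (gtil q k w \<omega>) \<partial>?N) $ i = (\<integral>\<omega>. csq (gtil q k w \<omega>) $ i \<partial>?N)"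
    by (intro integral_vec_nth integrable_vec_lambda_nth int_gtil)
  also have "\<dots> \<le> (\<integral>\<omega>. 4 * B^2 * ?xsq i (fst (fst \<omega>)) (fst (snd \<omega>)) \<partial>?N)"
    using int_xsq[where i=i] by (intro integral_mono_AE[OF int_gtil _ gtil_le]) simp
  also have "\<dots> = 4 * B^2 * (\<integral>x. (\<integral>I. ?xsq i (fst x) I \<partial>?P) \<partial>D)"
    using step_space_integral_samples(1)[OF D(1) int_xsq[where i=i]] by simp
  also have "(\<integral>x. (\<integral>I. ?xsq i (fst x) I \<partial>?P) \<partial>D) \<le> (\<integral>x. (fst x $ i)^2 / pmf q i / real k + 1 \<partial>D)"
  proof (rule integral_mono_AE)
    show "integrable D (\<lambda>x. \<integral>I. ?xsq i (fst x) I \<partial>?P)"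
      by (rule step_space_integral_samples(2)[OF D(1) int_xsq[where i=i]])
    show "integrable D (\<lambda>x. (fst x $ i)^2 / pmf q i / real k + 1)"
      by (intro Bochner_Integration.integrable_add integrable_divide int_moment D.integrable_const)
    show "AE x in D. (\<integral>I. ?xsq i (fst x) I \<partial>?P) \<le> (fst x $ i)^2 / pmf q i / real k + 1"
      using data
      by eventually_elim (blast intro: expectation_xtil_nth_sq_le[OF k] abs_nth_le_of_linfnorm_le)
  qed
  also have "(\<integral>x. (fst x $ i)^2 / pmf q i / real k + 1 \<partial>D) = sample_sq_moment D q $ i / real k + 1"
    by (subst Bochner_Integration.integral_add[OF integrable_divide[OF int_moment]])
       (simp_all add: sample_sq_moment_def D.prob_space)
  finally show ?thesis by (simp add: mult_left_mono)
qed

theorem lemma12: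
  fixes D :: "((real^'n) \<times> real) measure" and q :: "'n pmf"
    and k :: nat and B \<eta> :: real
  assumes "prob_space D" and "sets D = sets borel"
    and "B > 0" and "\<eta> > 0" and "k > 0"
    and "AE xy in D. linfnorm (fst xy) \<le> 1 \<and> \<bar>snd xy\<bar> \<le> B"
  shows "\<forall>t. \<forall>r<k.
     linfnorm (EA D q k B \<eta> t (\<lambda>s \<omega>. csq (gtil q k (weight B s) \<omega>)))
       \<le> 4 * B^2 * ((1 / real k) *
            linfnorm (EA D q k B \<eta> t (\<lambda>s \<omega>. csq (xtil_r q (fst (fst \<omega>)) (fst (snd \<omega>) r)))) + 1)"
proof (intro allI impI)
  fix t r assume "r < k"
  let ?V = "sample_sq_moment D q"
  let ?G = "EA D q k B \<eta> t (\<lambda>s \<omega>. csq (gtil q k (weight B s) \<omega>))"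
  interpret S: prob_space "state_dist D q k B \<eta> t"
    by (rule prob_space_state_dist[OF assms(1,2)])
  have V: "EA D q k B \<eta> t (\<lambda>s \<omega>. csq (xtil_r q (fst (fst \<omega>)) (fst (snd \<omega>) r))) = ?V"
    unfolding EA_def
    by (simp add: step_space_integral_csq_xtil_r[OF assms(1,2) \<open>r < k\<close> assms(6)] S.prob_space)
  have "\<bar>?G $ i\<bar> \<le> 4 * B^2 * ((1 / real k) * linfnorm ?V + 1)" for i
  proof -
    have "0 \<le> ?V $ i"
      by (simp add: sample_sq_moment_def)
    then have "?G $ i \<le> 4 * B^2 * (?V $ i / real k + 1)"
      unfolding EA_def
      by (intro S.integral_vec_nth_le_const step_space_integral_csq_gtil_le[OF assms(1,2,5,6)]
          l1norm_weight_le[OF assms(3)]) simp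
    also have "\<dots> \<le> 4 * B^2 * ((1 / real k) * linfnorm ?V + 1)"
      using abs_le_linfnorm[of ?V i]
      by (intro mult_left_mono add_right_mono) (simp_all add: divide_right_mono)
    moreover have "0 \<le> ?G $ i"
      unfolding EA_def by (intro integral_vec_nth_nonneg) simp
    ultimately show ?thesis by simp
  qed
  then show "linfnorm ?G \<le> 4 * B^2 * ((1 / real k) *
      linfnorm (EA D q k B \<eta> t (\<lambda>s \<omega>. csq (xtil_r q (fst (fst \<omega>)) (fst (snd \<omega>) r)))) + 1)"
    unfolding V by (rule linfnorm_le)
qed

end
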